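(* Let $M(\mu(u))$ be the Verma module over the Yangian $\mathrm{Y}(\mathfrak{sl}_2)$ with highest vector $1_\mu$, where $\mu(u)=P(u)/Q(u)$ (as a Laurent expansion at $u=\infty$) for monic polynomials $P(u),Q(u)$ in $u$ of degree $p$. Then for any integer $s\ge p$ there exist constants $c_0,\dots,c_{s-1}\in\mathbb{C}$ such that the vector $\zeta=c_0f^{(0)}1_\mu+\cdots+c_{s-1}f^{(s-1)}1_\mu+f^{(s)}1_\mu$ satisfies $e(u)\,\zeta=0$, i.e. $e^{(r)}\zeta=0$ for all $r\ge0$.
   Context: The Yangian $\mathrm{Y}(\mathfrak{sl}_2)$ is the associative algebra over $\mathbb{C}$ with generators $e^{(r)},h^{(r)},f^{(r)}$, $r\ge0$, and relations $[h^{(r)},h^{(s)}]=0$, $[e^{(r)},f^{(s)}]=h^{(r+s)}$, $[h^{(0)},e^{(s)}]=2e^{(s)}$, $[h^{(0)},f^{(s)}]=-2f^{(s)}$, $[h^{(r+1)},e^{(s)}]-[h^{(r)},e^{(s+1)}]=h^{(r)}e^{(s)}+e^{(s)}h^{(r)}$, $[h^{(r+1)},f^{(s)}]-[h^{(r)},f^{(s+1)}]=-(h^{(r)}f^{(s)}+f^{(s)}h^{(r)})$, $[e^{(r+1)},e^{(s)}]-[e^{(r)},e^{(s+1)}]=e^{(r)}e^{(s)}+e^{(s)}e^{(r)}$, $[f^{(r+1)},f^{(s)}]-[f^{(r)},f^{(s+1)}]=-(f^{(r)}f^{(s)}+f^{(s)}f^{(r)})$. Write $e(u)=\sum_{r\ge0}e^{(r)}u^{-r-1}$.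 For $\mu(u)=1+\mu^{(0)}u^{-1}+\mu^{(1)}u^{-2}+\cdots$, the Verma module $M(\mu(u))$ is the quotient of $\mathrm{Y}(\mathfrak{sl}_2)$ by the left ideal generated by $e^{(r)}$ and $h^{(r)}-\mu^{(r)}$, $r\ge0$; $1_\mu$ is the image of $1$. *)

theory Defs
  imports Complex_Main "HOL-Library.Poly_Mapping" "HOL-Computational_Algebra.Polynomial"
    "HOL-Computational_Algebra.Formal_Power_Series" "HOL-Computational_Algebra.Polynomial_FPS"
begin

datatype ygen = GE nat | GH nat | GF nat

datatype yword = YWord "ygen list"

instantiation yword :: monoid_add
begin
definition zero_yword :: yword where "zero_yword = YWord []"
fun plus_yword :: "yword \<Rightarrow> yword \<Rightarrow> yword" where
  "plus_yword (YWord a) (YWord b) = YWord (a @ b)"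
instance
proof
  fix a b c :: yword
  show "a + b + c = a + (b + c)" by (cases a; cases b; cases c) simp
  show "0 + a = a" by (cases a) (simp add: zero_yword_def)
  show "a + 0 = a" by (cases a) (simp add: zero_yword_def)
qed
end

text \<open>The free associative algebra over the complex numbers: finitely supported
  complex-valued functions on words, with convolution product.\<close>
type_synonym yfree = "yword \<Rightarrow>\<^sub>0 complex"

definition ysc :: "complex \<Rightarrow> yfree" where
  "ysc c = Poly_Mapping.single 0 c"

definition ye :: "nat \<Rightarrow> yfree" where "ye r = Poly_Mapping.single (YWord [GE r]) 1"
definition yh :: "nat \<Rightarrow> yfree" where "yh r = Poly_Mapping.single (YWord [GH r]) 1"
definition yf :: "nat \<Rightarrow> yfree" where "yf r = Poly_Mapping.single (YWord [GF r]) 1"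

definition comm :: "yfree \<Rightarrow> yfree \<Rightarrow> yfree" where
  "comm x y = x * y - y * x"

text \<open>Defining relations of Y(sl_2), each written as (lhs - rhs).\<close>
definition yang_rels :: "yfree set" where
  "yang_rels =
     {comm (yh r) (yh s) | r s. True}
   \<union> {comm (ye r) (yf s) - yh (r + s) | r s. True}
   \<union> {comm (yh 0) (ye s) - ysc 2 * ye s | s. True}
   \<union> {comm (yh 0) (yf s) + ysc 2 * yf s | s. True}
   \<union> {comm (yh (Suc r)) (ye s) - comm (yh r) (ye (Suc s)) - (yh r * ye s + ye s * yh r) | r s. True}
   \<union> {comm (yh (Suc r)) (yf s) - comm (yh r) (yf (Suc s)) + (yh r * yf s + yf s * yh r) | r s. True}
   \<union> {comm (ye (Suc r)) (ye s) - comm (ye r) (ye (Suc s)) - (ye r * ye s + ye s * ye r) | r s. True}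
   \<union> {comm (yf (Suc r)) (yf s) - comm (yf r) (yf (Suc s)) + (yf r * yf s + yf s * yf r) | r s. True}"

text \<open>Preimage in the free algebra of the left ideal of Y(sl_2) generated by
  e^(r) and h^(r) - mu^(r): it is the sum of the two-sided ideal of the defining
  relations and the left ideal of the free algebra generated by these elements.
  Thus the Verma module M(mu(u)) is the free algebra modulo this subspace, and
  1_mu is the class of 1.\<close>
inductive_set verma_ideal :: "(nat \<Rightarrow> complex) \<Rightarrow> yfree set" for mu :: "nat \<Rightarrow> complex" where
  rel: "x \<in> yang_rels \<Longrightarrow> a * x * b \<in> verma_ideal mu"
| e: "a * ye r \<in> verma_ideal mu"
| h: "a * (yh r - ysc (mu r)) \<in> verma_ideal mu"
| zero: "0 \<in> verma_ideal mu"
| add: "x \<in> verma_ideal mu \<Longrightarrow> y \<in> verma_ideal mu \<Longrightarrow> x + y \<in> verma_ideal mu"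

text \<open>The series mu(u) = 1 + sum_r mu^(r) u^(-r-1), as a formal power series in u^(-1).\<close>
definition mu_series :: "(nat \<Rightarrow> complex) \<Rightarrow> complex fps" where
  "mu_series mu = Abs_fps (\<lambda>k. if k = 0 then 1 else mu (k - 1))"

end

theory Submission imports Defs begin

text \<open>Since e^(r) kills 1_mu, in M(mu(u)) we have
  e^(r) f^(i) 1_mu = [e^(r), f^(i)] 1_mu = h^(r+i) 1_mu = mu^(r+i) 1_mu, so
  e^(r) (c_0 f^(0) + ... + c_s f^(s)) 1_mu = (c_0 mu^(r) + ... + c_s mu^(r+s)) 1_mu.
  The identity Q(u) mu(u) = P(u) with deg P = deg Q says exactly that the sequence
  mu^(0), mu^(1), ... satisfies the linear recurrence with characteristic polynomial Q,
  hence also the one with characteristic polynomial u^(s-p) Q(u), which is monic of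
  degree s. Its coefficients are the c_i.\<close>

lemma verma_ideal_mult_left:
  assumes "x \<in> verma_ideal mu"
  shows "y * x \<in> verma_ideal mu"
  using assms
proof (induction rule: verma_ideal.induct)
  case (rel x a b)
  then show ?case using verma_ideal.rel[of x "y * a" b] by (simp add: mult.assoc)
next
  case (e a r)
  then show ?case using verma_ideal.e[of "y * a" r] by (simp add: mult.assoc)
next
  case (h a r)
  then show ?case using verma_ideal.h[of "y * a" r] by (simp add: mult.assoc)
next
  case zero
  then show ?case by (simp add: verma_ideal.zero)
next
  case (add x1 x2)
  then show ?case by (simp add: distrib_left verma_ideal.add)
qed

lemma ysc_0 [simp]: "ysc 0 = 0"
  by (simp add: ysc_def)

lemma ysc_1 [simp]: "ysc 1 = 1"
  by (simp add: ysc_def)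

lemma ysc_add: "ysc (a + b) = ysc a + ysc b"
  by (simp add: ysc_def single_add)

lemma ysc_mult: "ysc (a * b) = ysc a * ysc b"
  by (simp add: ysc_def mult_single)

lemma ysc_sum: "ysc (\<Sum>i\<in>A. g i) = (\<Sum>i\<in>A. ysc (g i))"
  by (induction A rule: infinite_finite_induct) (simp_all add: ysc_add)

lemma ye_mult_ysc: "ye r * ysc c = ysc c * ye r"
  by (simp add: ye_def ysc_def mult_single)

lemma verma_ideal_sum:
  assumes "\<And>i. i \<in> A \<Longrightarrow> g i \<in> verma_ideal mu"
  shows "(\<Sum>i\<in>A. g i) \<in> verma_ideal mu"
  using assms
  by (induction A rule: infinite_finite_induct) (auto intro: verma_ideal.zero verma_ideal.add)

lemma ye_mult_yf_mod_verma_ideal: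
  "ye r * yf i - ysc (mu (r + i)) \<in> verma_ideal mu"
proof -
  have "comm (ye r) (yf i) - yh (r + i) \<in> yang_rels"
    unfolding yang_rels_def by blast
  from verma_ideal.rel[OF this, of 1 1] have rel: "comm (ye r) (yf i) - yh (r + i) \<in> verma_ideal mu"
    by simp
  have h: "yh (r + i) - ysc (mu (r + i)) \<in> verma_ideal mu"
    using verma_ideal.h[of 1] by simp
  have "ye r * yf i - ysc (mu (r + i)) =
      (comm (ye r) (yf i) - yh (r + i)) + (yh (r + i) - ysc (mu (r + i))) + yf i * ye r"
    by (simp add: comm_def)
  then show ?thesis
    using rel h verma_ideal.e verma_ideal.add by metis
qed

lemma ye_mult_lincomb_yf_mod_verma_ideal:
  "ye r * (\<Sum>i\<in>A. ysc (a i) * yf i) - ysc (\<Sum>i\<in>A. a i * mu (r + i)) \<in> verma_ideal mu"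
proof -
  have "ye r * (\<Sum>i\<in>A. ysc (a i) * yf i) - ysc (\<Sum>i\<in>A. a i * mu (r + i)) =
      (\<Sum>i\<in>A. ysc (a i) * (ye r * yf i - ysc (mu (r + i))))"
    by (simp add: sum_distrib_left ysc_sum ysc_mult sum_subtractf right_diff_distrib
        ye_mult_ysc flip: mult.assoc)
  then show ?thesis
    by (simp add: verma_ideal_sum verma_ideal_mult_left ye_mult_yf_mod_verma_ideal)
qed

definition satisfies_recurrence :: "'a::comm_semiring_0 poly \<Rightarrow> (nat \<Rightarrow> 'a) \<Rightarrow> bool" where
  "satisfies_recurrence Q x \<longleftrightarrow> (\<forall>r. (\<Sum>i\<le>degree Q. coeff Q i * x (r + i)) = 0)"

lemma sum_coeff_atMost_degree:
  fixes Q :: "'a::comm_semiring_0 poly"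
  assumes "degree Q \<le> n"
  shows "(\<Sum>i\<le>n. coeff Q i * x i) = (\<Sum>i\<le>degree Q. coeff Q i * x i)"
  using assms by (intro sum.mono_neutral_right) (auto simp: coeff_eq_0)

lemma satisfies_recurrence_monom_mult:
  fixes Q :: "'a::comm_semiring_1 poly"
  assumes "satisfies_recurrence Q x"
  shows "satisfies_recurrence (monom 1 d * Q) x"
  unfolding satisfies_recurrence_def
proof
  fix r
  have deg: "degree (monom 1 d * Q) \<le> d + degree Q"
    using degree_mult_le[of "monom 1 d" Q] degree_monom_le[of "1::'a" d] by linarith
  have "(\<Sum>i\<le>degree (monom 1 d * Q). coeff (monom 1 d * Q) i * x (r + i)) =
      (\<Sum>i\<le>d + degree Q. coeff (monom 1 d * Q) i * x (r + i))"
    using sum_coeff_atMost_degree[OF deg, of "\<lambda>i. x (r + i)"] by simp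
  also have "\<dots> = (\<Sum>i=0 + d..degree Q + d. coeff (monom 1 d * Q) i * x (r + i))"
    by (intro sum.mono_neutral_right) (auto simp: coeff_monom_mult)
  also have "\<dots> = (\<Sum>k\<le>degree Q. coeff Q k * x ((r + d) + k))"
    by (simp only: sum.shift_bounds_cl_nat_ivl atLeast0AtMost)
      (simp add: coeff_monom_mult add.commute add.left_commute)
  also have "\<dots> = 0"
    using assms unfolding satisfies_recurrence_def by blast
  finally show "(\<Sum>i\<le>degree (monom 1 d * Q). coeff (monom 1 d * Q) i * x (r + i)) = 0" .
qed

lemma satisfies_recurrence_of_fps_eq:
  fixes P Q :: "'a::comm_semiring_1 poly" and F :: "'a fps"
  assumes eq: "fps_of_poly (reflect_poly Q) * F = fps_of_poly (reflect_poly P)"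
    and deg: "degree P \<le> degree Q"
  shows "satisfies_recurrence Q (\<lambda>k. fps_nth F (Suc k))"
  unfolding satisfies_recurrence_def
proof
  fix r
  \<comment> \<open>In the variable u^(-1), reflect_poly Q is u^(-deg Q) Q(u), so the coefficient of
    u^(-n), n > deg Q, of the left-hand side is the recurrence at r = n - deg Q - 1.\<close>
  define n where "n = Suc (r + degree Q)"
  have "fps_nth (fps_of_poly (reflect_poly Q) * F) n = 0"
    unfolding eq using degree_reflect_poly_le[of P] deg by (simp add: n_def coeff_eq_0)
  then have "(\<Sum>j=0..n. coeff (reflect_poly Q) j * fps_nth F (n - j)) = 0"
    by (simp add: fps_mult_nth)
  also have "(\<Sum>j=0..n. coeff (reflect_poly Q) j * fps_nth F (n - j)) =
      (\<Sum>j=0..degree Q. coeff Q (degree Q - j) * fps_nth F (n - j))"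
    by (rule sum.mono_neutral_cong_right) (auto simp: n_def coeff_reflect_poly)
  also have "\<dots> = (\<Sum>i=0..degree Q. coeff Q i * fps_nth F (Suc (r + i)))"
    by (subst sum.atLeastAtMost_rev) (auto intro!: sum.cong simp: n_def)
  finally show "(\<Sum>i\<le>degree Q. coeff Q i * fps_nth F (Suc (r + i))) = 0"
    by (simp add: atLeast0AtMost)
qed

lemma ye_mult_recurrence_vector:
  assumes "satisfies_recurrence R mu" and "lead_coeff R = 1"
  shows "ye r * ((\<Sum>i<degree R. ysc (coeff R i) * yf i) + yf (degree R)) \<in> verma_ideal mu"
proof -
  have "(\<Sum>i<degree R. ysc (coeff R i) * yf i) + yf (degree R) =
      (\<Sum>i\<le>degree R. ysc (coeff R i) * yf i)"
    using assms(2) by (simp add: lessThan_Suc_atMost[symmetric])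
  moreover have "(\<Sum>i\<le>degree R. coeff R i * mu (r + i)) = 0"
    using assms(1) unfolding satisfies_recurrence_def by blast
  ultimately show ?thesis
    using ye_mult_lincomb_yf_mod_verma_ideal[where A = "{..degree R}" and a = "coeff R" and r = r and mu = mu]
    by simp
qed

theorem corollary3p7:
  fixes mu :: "nat \<Rightarrow> complex" and P Q :: "complex poly" and p s :: nat
  assumes "lead_coeff P = 1" and "lead_coeff Q = 1"
    and "degree P = p" and "degree Q = p"
    and "fps_of_poly (reflect_poly Q) * mu_series mu = fps_of_poly (reflect_poly P)"
    and "s \<ge> p"
  shows "\<exists>c :: nat \<Rightarrow> complex. \<forall>r.
           ye r * ((\<Sum>i<s. ysc (c i) * yf i) + yf s) \<in> verma_ideal mu"
proof -
  define R where "R = monom 1 (s - p) * Q"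
  have "Q \<noteq> 0"
    using assms(2) by auto
  moreover have "degree (monom (1::complex) (s - p)) = s - p"
    by (simp add: degree_monom_eq)
  ultimately have deg_R: "degree R = s"
    using assms(4,6) by (simp add: R_def degree_mult_eq)
  have "lead_coeff R = 1"
    by (simp only: R_def lead_coeff_mult lead_coeff_monom assms(2) mult_1)
  have mu_shift: "(\<lambda>k. fps_nth (mu_series mu) (Suc k)) = mu"
    by (simp add: mu_series_def)
  have "satisfies_recurrence Q mu"
    using satisfies_recurrence_of_fps_eq[OF assms(5)] assms(3,4) by (simp add: mu_shift)
  then have "satisfies_recurrence R mu"
    unfolding R_def by (rule satisfies_recurrence_monom_mult)
  then show ?thesis
    using ye_mult_recurrence_vector[OF _ \<open>lead_coeff R = 1\<close>] deg_R by blast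
qed

end
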